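(* Let $K$ be a field and $(Q,f,g,c,W)$ as in the setting below, and assume that either $Q$ satisfies $(\star)$, or $Q$ satisfies $(\diamond)$ and $\prod_{\alpha\in\Omega}c_\alpha\neq1$ for $\Omega$ a set of representatives of the $g$-orbits. Then the potential $W$ is not rigid.
   Context: Setting: $Q$ is a finite quiver with arrow set $Q_1$, connected, without loops or $2$-cycles, every vertex being the source of exactly two arrows and the target of exactly two arrows, equipped with bijections $f,g:Q_1\to Q_1$ such that for each $\alpha$, $\{f(\alpha),g(\alpha)\}$ is the set of the two arrows starting at the target of $\alpha$, and $f^3=\mathrm{id}$. $n_\alpha$ is the size of the $g$-orbit of $\alpha$. $c:Q_1\to K^\times$ is constant on $g$-orbits. Paths compose left to right. $W=\sum_\alpha \alpha\cdot f(\alpha)\cdot f^2(\alpha)-\sum_\beta c_\beta\,\beta\cdot g(\beta)\cdots g^{n_\beta-1}(\beta)$ (sums over representatives of $f$-orbits, resp. $g$-orbits) in the completed path algebra $\widehat{KQ}$. The Jacobian ideal $J(W)$ is the closure of the two-sided ideal generated by the cyclic derivatives of $W$. $W$ is rigid if every potential on $Q$ is cyclically equivalent to an element of $J(W)$. $(\star)$: for every $\alpha$, $n_\alpha\ge4$ or $n_{f(\alpha)}\ge4$. $(\diamond)$: $n_\alpha=3$ for all $\alpha$. *)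

theory Defs
  imports Main
begin

text \<open>A path is a pair (v, xs): start vertex v and a composable list of arrows
  (paths compose left to right: t of xs!i equals s of xs!(i+1)); (v, []) is the trivial path e_v.
  Elements of the completed path algebra are functions path -> K supported on valid paths.\<close>

definition pend :: "('a \<Rightarrow> 'v) \<Rightarrow> 'v \<Rightarrow> 'a list \<Rightarrow> 'v" where
  "pend t v xs = (if xs = [] then v else t (last xs))"

definition is_path :: "('a \<Rightarrow> 'v) \<Rightarrow> ('a \<Rightarrow> 'v) \<Rightarrow> 'v \<times> 'a list \<Rightarrow> bool" where
  "is_path s t p = (case p of (v, xs) \<Rightarrow>
     (xs \<noteq> [] \<longrightarrow> s (hd xs) = v) \<and> (\<forall>i. Suc i < length xs \<longrightarrow> t (xs ! i) = s (xs ! Suc i)))"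

definition is_cycle :: "('a \<Rightarrow> 'v) \<Rightarrow> ('a \<Rightarrow> 'v) \<Rightarrow> 'v \<times> 'a list \<Rightarrow> bool" where
  "is_cycle s t p = (is_path s t p \<and> snd p \<noteq> [] \<and> pend t (fst p) (snd p) = fst p)"

definition cpa :: "('a \<Rightarrow> 'v) \<Rightarrow> ('a \<Rightarrow> 'v) \<Rightarrow> ('v \<times> 'a list \<Rightarrow> 'k::field) \<Rightarrow> bool" where
  "cpa s t x = (\<forall>p. x p \<noteq> 0 \<longrightarrow> is_path s t p)"

text \<open>Potential: element of the closed subspace spanned by cycles (of positive length).\<close>
definition potential :: "('a \<Rightarrow> 'v) \<Rightarrow> ('a \<Rightarrow> 'v) \<Rightarrow> ('v \<times> 'a list \<Rightarrow> 'k::field) \<Rightarrow> bool" where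
  "potential s t x = (\<forall>p. x p \<noteq> 0 \<longrightarrow> is_cycle s t p)"

definition pmul :: "('a \<Rightarrow> 'v) \<Rightarrow> ('v \<times> 'a list \<Rightarrow> 'k::field) \<Rightarrow> ('v \<times> 'a list \<Rightarrow> 'k) \<Rightarrow> 'v \<times> 'a list \<Rightarrow> 'k" where
  "pmul t x y = (\<lambda>(v, xs). \<Sum>i\<in>{0..length xs}. x (v, take i xs) * y (pend t v (take i xs), drop i xs))"

definition cyc :: "('a \<Rightarrow> 'v) \<Rightarrow> 'a list \<Rightarrow> 'v \<times> 'a list" where
  "cyc s xs = (s (hd xs), xs)"

definition delta :: "'p \<Rightarrow> 'p \<Rightarrow> 'k::field" where
  "delta p = (\<lambda>q. if q = p then 1 else 0)"

text \<open>Cyclic derivative with respect to the arrow a: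
  d_a (a1...ad) = sum over k with ak = a of a(k+1)...ad a1...a(k-1), extended continuously.
  The coefficient of q (a path from t a to s a) is the sum of the coefficients of W at the
  |q|+1 rotations of the cycle a q (one for each position of the letter a).\<close>
definition cder :: "('a \<Rightarrow> 'v) \<Rightarrow> ('a \<Rightarrow> 'v) \<Rightarrow> 'a \<Rightarrow> ('v \<times> 'a list \<Rightarrow> 'k::field) \<Rightarrow> 'v \<times> 'a list \<Rightarrow> 'k" where
  "cder s t a W = (\<lambda>(v, q). if is_path s t (v, q) \<and> v = t a \<and> pend t v q = s a
       then (\<Sum>j<Suc (length q). W (cyc s (rotate j (a # q)))) else 0)"

inductive_set ideal_span :: "('a \<Rightarrow> 'v) \<Rightarrow> ('a \<Rightarrow> 'v) \<Rightarrow> ('v \<times> 'a list \<Rightarrow> 'k::field) set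
    \<Rightarrow> ('v \<times> 'a list \<Rightarrow> 'k) set" for s t S where
  zero: "(\<lambda>_. 0) \<in> ideal_span s t S"
| step: "x \<in> ideal_span s t S \<Longrightarrow> y \<in> S \<Longrightarrow> cpa s t u \<Longrightarrow> cpa s t w \<Longrightarrow>
     (\<lambda>p. x p + pmul t (pmul t u y) w p) \<in> ideal_span s t S"

text \<open>Closure in the m-adic topology (m = arrow ideal): x is in the closure of X iff for every L
  some element of X agrees with x on all paths of length at most L.\<close>
definition mclosure :: "('a \<Rightarrow> 'v) \<Rightarrow> ('a \<Rightarrow> 'v) \<Rightarrow> ('v \<times> 'a list \<Rightarrow> 'k::field) set
    \<Rightarrow> ('v \<times> 'a list \<Rightarrow> 'k) set" where
  "mclosure s t X = {x. cpa s t x \<and> (\<forall>L. \<exists>y\<in>X. \<forall>p. length (snd p) \<le> L \<longrightarrow> x p = y p)}"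

definition jacobian_ideal :: "('a \<Rightarrow> 'v) \<Rightarrow> ('a \<Rightarrow> 'v) \<Rightarrow> ('v \<times> 'a list \<Rightarrow> 'k::field)
    \<Rightarrow> ('v \<times> 'a list \<Rightarrow> 'k) set" where
  "jacobian_ideal s t W = mclosure s t (ideal_span s t (range (\<lambda>a. cder s t a W)))"

inductive_set cyc_comm_span :: "('a \<Rightarrow> 'v) \<Rightarrow> ('a \<Rightarrow> 'v) \<Rightarrow> ('v \<times> 'a list \<Rightarrow> 'k::field) set"
  for s t where
  zero: "(\<lambda>_. 0) \<in> cyc_comm_span s t"
| step: "x \<in> cyc_comm_span s t \<Longrightarrow> is_cycle s t (v, xs) \<Longrightarrow>
     (\<lambda>p. x p + (k::'k) * (delta (v, xs) p - delta (cyc s (rotate1 xs)) p)) \<in> cyc_comm_span s t"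

definition cyc_equiv :: "('a \<Rightarrow> 'v) \<Rightarrow> ('a \<Rightarrow> 'v) \<Rightarrow> ('v \<times> 'a list \<Rightarrow> 'k::field)
    \<Rightarrow> ('v \<times> 'a list \<Rightarrow> 'k) \<Rightarrow> bool" where
  "cyc_equiv s t W W' = ((\<lambda>p. W p - W' p) \<in> mclosure s t (cyc_comm_span s t))"

definition rigid :: "('a \<Rightarrow> 'v) \<Rightarrow> ('a \<Rightarrow> 'v) \<Rightarrow> ('v \<times> 'a list \<Rightarrow> 'k::field) \<Rightarrow> bool" where
  "rigid s t W = (\<forall>P :: 'v \<times> 'a list \<Rightarrow> 'k. potential s t P \<longrightarrow>
       (\<exists>Y\<in>jacobian_ideal s t W. cyc_equiv s t P Y))"

definition orbit_size :: "('a \<Rightarrow> 'a) \<Rightarrow> 'a \<Rightarrow> nat" where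
  "orbit_size h a = card {(h ^^ k) a | k. True}"

definition orbit_reps :: "('a \<Rightarrow> 'a) \<Rightarrow> 'a set \<Rightarrow> bool" where
  "orbit_reps h R = (\<forall>a. \<exists>!b. b \<in> R \<and> (\<exists>k. (h ^^ k) a = b))"

definition QP_potential :: "('a \<Rightarrow> 'v) \<Rightarrow> ('a \<Rightarrow> 'a) \<Rightarrow> ('a \<Rightarrow> 'a) \<Rightarrow> ('a \<Rightarrow> 'k::field)
    \<Rightarrow> 'a set \<Rightarrow> 'a set \<Rightarrow> 'v \<times> 'a list \<Rightarrow> 'k" where
  "QP_potential s f g c Rf Rg = (\<lambda>p.
     (\<Sum>a\<in>Rf. delta (cyc s [a, f a, f (f a)]) p)
     - (\<Sum>b\<in>Rg. c b * delta (cyc s (map (\<lambda>k. (g ^^ k) b) [0..<orbit_size g b])) p))"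

end

theory Submission
  imports Defs "HOL-Combinatorics.Orbits"
begin

(* The cyclic derivative of W with respect to an arrow x is f(x) f^2(x) - c_x g(x) ... g^(n_x - 1)(x),
  so modulo J(W) the triangle at x equals c_x times the g-cycle at x. Accordingly, the linear
  functional obstruction adds the coefficients of all triangles x f(x) f^2(x) and the coefficients of
  all g-cycles divided by c. It is invariant under rotation of cycles, so it vanishes on cyclic
  commutators; it reads only coefficients of paths of bounded length, so it passes to m-adic closures;
  and it kills every u (d_x W) w, because the only triangles and g-cycles occurring there come from the
  constant and linear parts of u and w and cancel in pairs. As it takes the value 1 on a single
  triangle, that potential is not cyclically equivalent to an element of J(W). *)

section \<open>Orbits of a permutation of a finite type\<close>

lemma orbit_size_eq_funpow_dist1:
  assumes "permutation h"
  shows "orbit_size h a = funpow_dist1 h a a"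
proof -
  have self: "a \<in> orbit h a" using assms by (rule permutation_self_in_orbit)
  have "orbit_size h a = card ((\<lambda>k. (h ^^ k) a) ` {0..<funpow_dist1 h a a})"
    unfolding orbit_size_def orbit_altdef_permutation[OF assms, symmetric]
    by (simp only: orbit_conv_funpow_dist1[OF self])
  also have "\<dots> = funpow_dist1 h a a"
    by (simp add: card_image[OF inj_on_funpow_dist1[OF self]])
  finally show ?thesis .
qed

lemma funpow_orbit_size:
  assumes "permutation h"
  shows "(h ^^ orbit_size h a) a = a"
  unfolding orbit_size_eq_funpow_dist1[OF assms]
  by (rule funpow_dist1_prop[OF permutation_self_in_orbit[OF assms]])

lemma inj_on_funpow_orbit_size:
  assumes "permutation h"
  shows "inj_on (\<lambda>k. (h ^^ k) a) {..<orbit_size h a}"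
  using inj_on_funpow_dist1[OF permutation_self_in_orbit[OF assms]]
  by (simp add: orbit_size_eq_funpow_dist1[OF assms] atLeast0LessThan)

lemma orbit_size_step:
  assumes "permutation h"
  shows "orbit_size h (h a) = orbit_size h a"
  unfolding orbit_size_def orbit_altdef_permutation[OF assms, symmetric]
  using assms by (simp add: self_in_orbit_step permutation_self_in_orbit)

lemma orbit_size_funpow:
  assumes "permutation h"
  shows "orbit_size h ((h ^^ j) a) = orbit_size h a"
  by (induction j) (simp_all add: orbit_size_step[OF assms])

lemma orbit_size_le_card:
  fixes h :: "'a::finite \<Rightarrow> 'a"
  shows "orbit_size h a \<le> card (UNIV :: 'a set)"
  unfolding orbit_size_def by (rule card_mono) auto

lemma sum_orbit_reps:
  assumes "permutation h" "orbit_reps h R"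
  shows "(\<Sum>j<orbit_size h a. if (h ^^ j) a \<in> R then k else 0) = k"
proof -
  obtain b where b: "b \<in> R" "\<exists>m. (h ^^ m) a = b"
    and unique: "\<And>b'. b' \<in> R \<Longrightarrow> \<exists>m. (h ^^ m) a = b' \<Longrightarrow> b' = b"
    using assms(2) unfolding orbit_reps_def by metis
  obtain m where m: "(h ^^ m) a = b" using b by blast
  let ?n = "orbit_size h a"
  have n_pos: "0 < ?n" by (simp add: orbit_size_eq_funpow_dist1[OF assms(1)])
  have "{j \<in> {..<?n}. (h ^^ j) a \<in> R} = {m mod ?n}"
  proof (intro set_eqI iffI)
    fix j assume "j \<in> {j \<in> {..<?n}. (h ^^ j) a \<in> R}"
    then have "j < ?n" "(h ^^ j) a = (h ^^ (m mod ?n)) a"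
      using unique m funpow_mod_eq[OF funpow_orbit_size[OF assms(1)]] by auto
    then show "j \<in> {m mod ?n}"
      using inj_onD[OF inj_on_funpow_orbit_size[OF assms(1), of a], of j "m mod ?n"] n_pos by simp
  qed (use m b n_pos funpow_mod_eq[OF funpow_orbit_size[OF assms(1)]] in auto)
  then show ?thesis
    by (simp add: sum.inter_filter[symmetric])
qed

section \<open>Words and the completed path algebra\<close>

definition chain :: "('a \<Rightarrow> 'a) \<Rightarrow> 'a list \<Rightarrow> bool" where
  "chain h L = (\<forall>k. Suc k < length L \<longrightarrow> L ! Suc k = h (L ! k))"

lemma chain_drop_take:
  assumes "chain h L"
  shows "chain h (drop j (take i L))"
  unfolding chain_def
proof (intro allI impI)
  fix k assume k: "Suc k < length (drop j (take i L))"
  then have "Suc (j + k) < length L" by simp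
  with assms k show "drop j (take i L) ! Suc k = h (drop j (take i L) ! k)"
    unfolding chain_def by (simp add: drop_take)
qed

lemma chain_same_step:
  assumes "chain h L" "chain h' L" "2 \<le> length L"
  shows "h (hd L) = h' (hd L)"
proof -
  have "Suc 0 < length L" using assms(3) by simp
  then show ?thesis using assms(1,2) unfolding chain_def by (metis hd_conv_nth list.size(3) not_less0)
qed

lemma is_path_chain:
  assumes "chain h L" "\<And>a. s (h a) = t a"
  shows "is_path s t (s (hd L), L)"
  using assms unfolding is_path_def chain_def by auto

lemma rotate_inverse: "rotate ((length xs - 1) * n) (rotate n xs) = xs"
proof (cases xs)
  case (Cons x ys)
  then have "(length xs - 1) * n + n = length xs * n" by simp
  then show ?thesis by (simp add: rotate_rotate)
qed simp

lemma pmul_pmul_apply: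
  "pmul t (pmul t u D) w (v, L) = (\<Sum>i\<in>{0..length L}. \<Sum>j\<in>{0..i}.
     u (v, take j L) * D (pend t v (take j L), drop j (take i L)) * w (pend t v (take i L), drop i L))"
  unfolding pmul_def
  by (auto simp: sum_distrib_right min_absorb1 min_def intro!: sum.cong split: if_splits)

lemma pmul_pmul_diff_scale:
  "pmul t (pmul t u (\<lambda>p. D p - k * E p)) w
     = (\<lambda>p. pmul t (pmul t u D) w p - k * pmul t (pmul t u E) w p)"
  by (intro ext, clarify) (simp add: pmul_pmul_apply algebra_simps sum_subtractf sum_distrib_left)

lemma pmul_pmul_delta_apply:
  "pmul t (pmul t u (delta (v0, P))) w (v, L) = (\<Sum>i\<in>{0..length L}.
     if length P \<le> i \<and> pend t v (take (i - length P) L) = v0 \<and> drop (i - length P) (take i L) = P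
     then u (v, take (i - length P) L) * w (pend t v (take i L), drop i L) else 0)"
proof -
  define occ where "occ i \<longleftrightarrow> length P \<le> i \<and> pend t v (take (i - length P) L) = v0
    \<and> drop (i - length P) (take i L) = P" for i
  define F where "F i j = u (v, take j L) * w (pend t v (take i L), drop i L)" for i j
  have summand: "u (v, take j L) * delta (v0, P) (pend t v (take j L), drop j (take i L))
      * w (pend t v (take i L), drop i L)
    = (if j = i - length P then (if occ i then F i j else 0) else 0)"
    if "i \<le> length L" "j \<in> {0..i}" for i j
  proof (cases "drop j (take i L) = P")
    case True
    then have "j = i - length P" "length P \<le> i" using that by auto
    then show ?thesis using True by (simp add: occ_def F_def delta_def)
  next
    case False
    then show ?thesis by (auto simp: occ_def F_def delta_def)
  qed
  have "(\<Sum>j\<in>{0..i}. u (v, take j L) * delta (v0, P) (pend t v (take j L), drop j (take i L))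
      * w (pend t v (take i L), drop i L)) = (if occ i then F i (i - length P) else 0)"
    if "i \<le> length L" for i
    by (simp only: sum.cong[OF refl summand[OF that]]) simp
  then show ?thesis unfolding pmul_pmul_apply by (intro sum.cong) (simp_all add: occ_def F_def)
qed

lemma pmul_pmul_delta_eq_0:
  assumes "\<And>i j. drop j (take i L) \<noteq> P"
  shows "pmul t (pmul t u (delta (v0, P))) w (v, L) = 0"
  unfolding pmul_pmul_delta_apply using assms by (intro sum.neutral) auto

section \<open>Triangulation quivers\<close>

locale triangulation_quiver =
  fixes s t :: "'a::finite \<Rightarrow> 'v::finite"
    and f g :: "'a \<Rightarrow> 'a"
    and c :: "'a \<Rightarrow> 'k::field"
    and Rf Rg :: "'a set"
  assumes no_loops: "\<forall>a. s a \<noteq> t a"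
    and no_2cycles: "\<forall>a b. \<not> (s a = t b \<and> t a = s b)"
    and out2: "\<forall>v. card {a. s a = v} = 2"
    and bij_f: "bij f" and bij_g: "bij g"
    and fg: "\<forall>a. {f a, g a} = {b. s b = t a}"
    and f3: "f \<circ> f \<circ> f = id"
    and c_nz: "\<forall>a. c a \<noteq> 0"
    and c_const: "\<forall>a. c (g a) = c a"
    and Rf: "orbit_reps f Rf"
    and Rg: "orbit_reps g Rg"
begin

lemma s_f [simp]: "s (f a) = t a" using fg by blast
lemma s_g [simp]: "s (g a) = t a" using fg by blast
lemma f_f_f [simp]: "f (f (f a)) = a" using f3 by (metis comp_apply id_apply)
lemma t_f_f [simp]: "t (f (f a)) = s a" by (metis s_f f_f_f)

lemma permutation_f: "permutation f" using bij_f by (simp add: permutation)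
lemma permutation_g: "permutation g" using bij_g by (simp add: permutation)

lemma f_eq_iff [simp]: "f a = f b \<longleftrightarrow> a = b" using bij_f by (auto dest: bij_is_inj injD)
lemma g_eq_iff [simp]: "g a = g b \<longleftrightarrow> a = b" using bij_g by (auto dest: bij_is_inj injD)

lemma f_neq_g: "f a \<noteq> g a"
proof
  assume "f a = g a"
  then have "{b. s b = t a} = {f a}" using fg[rule_format, of a] by simp
  then show False using out2[rule_format, of "t a"] by simp
qed

lemma f_neq_self [simp]: "f a \<noteq> a" "f (f a) \<noteq> a" "f (f a) \<noteq> f a"
  using no_loops s_f f_f_f by metis+

lemma g_neq_self: "g a \<noteq> a" using no_loops s_g by metis

lemma c_funpow_g [simp]: "c ((g ^^ j) a) = c a"
  by (induction j) (auto simp: c_const)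

abbreviation n :: "'a \<Rightarrow> nat" where "n \<equiv> orbit_size g"

lemma funpow_g_n [simp]: "(g ^^ n a) a = a"
  using funpow_orbit_size[OF permutation_g] .

lemma n_funpow_g [simp]: "n ((g ^^ j) a) = n a"
  using orbit_size_funpow[OF permutation_g] .

lemma n_g [simp]: "n (g a) = n a"
  using orbit_size_step[OF permutation_g] .

lemma funpow_g_mod: "(g ^^ (k mod n a)) a = (g ^^ k) a"
  by (rule funpow_mod_eq) simp

lemma n_ge_3: "3 \<le> n a"
proof -
  have "0 < n a" by (simp add: orbit_size_eq_funpow_dist1[OF permutation_g])
  moreover have "n a \<noteq> 1"
  proof
    assume "n a = 1"
    then show False using funpow_g_n[of a] g_neq_self[of a] by simp
  qed
  moreover have "n a \<noteq> 2"
  proof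
    assume "n a = 2"
    then have "g (g a) = a" using funpow_g_n[of a] by (simp add: numeral_2_eq_2)
    then show False using no_2cycles s_g by metis
  qed
  ultimately show ?thesis by linarith
qed

lemma orbit_size_f: "orbit_size f a = 3"
proof -
  have "(f ^^ k) a \<in> {a, f a, f (f a)}" for k
    by (induction k) auto
  moreover have "{a, f a, f (f a)} \<subseteq> {(f ^^ k) a | k. True}"
    by (auto intro: exI[of _ 0] exI[of _ 1] exI[of _ 2] simp: numeral_2_eq_2)
  ultimately have "{(f ^^ k) a | k. True} = {a, f a, f (f a)}" by blast
  then show ?thesis
    unfolding orbit_size_def using f_neq_self[of a] by (simp add: card_insert_if eq_commute[of a])
qed

definition triangle :: "'a \<Rightarrow> 'a list" where
  "triangle a = [a, f a, f (f a)]"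

definition g_cycle :: "'a \<Rightarrow> 'a list" where
  "g_cycle a = map (\<lambda>k. (g ^^ k) a) [0..<n a]"

definition g_path :: "'a \<Rightarrow> 'a list" where
  "g_path a = tl (g_cycle a)"

lemma length_g_cycle [simp]: "length (g_cycle a) = n a"
  by (simp add: g_cycle_def)

lemma nth_g_cycle: "k < n a \<Longrightarrow> g_cycle a ! k = (g ^^ k) a"
  by (simp add: g_cycle_def)

lemma g_cycle_Cons: "g_cycle a = a # g_path a"
  using n_ge_3[of a] by (simp add: g_path_def g_cycle_def upt_conv_Cons)

lemma length_g_path [simp]: "length (g_path a) = n a - 1"
  by (simp add: g_path_def)

lemma hd_g_path [simp]: "hd (g_path a) = g a"
  using n_ge_3[of a] by (simp add: g_path_def g_cycle_def upt_conv_Cons)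

lemma g_path_neq_Nil [simp]: "g_path a \<noteq> []"
  using n_ge_3[of a] by (auto dest: arg_cong[of _ _ length])

lemma chain_triangle: "chain f (triangle a)"
  unfolding chain_def triangle_def by (auto simp: less_Suc_eq nth_Cons split: nat.splits)

lemma chain_f_path: "chain f [f a, f (f a)]"
  unfolding chain_def by (auto simp: less_Suc_eq)

lemma chain_g_cycle: "chain g (g_cycle a)"
  unfolding chain_def by (simp add: nth_g_cycle)

lemma chain_g_path: "chain g (g_path a)"
  using chain_drop_take[OF chain_g_cycle, of 1 "n a" a] by (simp add: g_path_def drop_Suc)

lemma not_chain_f_g: "chain f L \<Longrightarrow> chain g L \<Longrightarrow> length L < 2"
  using chain_same_step f_neq_g by (metis not_le)

lemma triangle_neq_g_cycle [simp]: "triangle a \<noteq> g_cycle b"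
proof
  assume "triangle a = g_cycle b"
  then show False using not_chain_f_g[OF chain_triangle, of a] chain_g_cycle[of b] n_ge_3[of b]
    by (simp add: triangle_def)
qed

lemma f_path_neq_g_path: "[f a, f (f a)] \<noteq> g_path b"
proof
  assume "[f a, f (f a)] = g_path b"
  then show False using not_chain_f_g[OF chain_f_path, of a] chain_g_path[of b] n_ge_3[of b]
    by simp
qed

lemma rotate1_triangle: "rotate1 (triangle a) = triangle (f a)"
  by (simp add: triangle_def)

lemma rotate_triangle: "rotate j (triangle a) = triangle ((f ^^ j) a)"
  by (induction j) (simp_all add: rotate1_triangle)

lemma rotate1_g_cycle: "rotate1 (g_cycle a) = g_cycle (g a)"
proof (rule nth_equalityI)
  fix k assume "k < length (rotate1 (g_cycle a))"
  then have k: "k < n a" by simp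
  have "rotate1 (g_cycle a) ! k = (g ^^ (Suc k mod n a)) a"
    using k by (simp add: nth_rotate1 nth_g_cycle)
  also have "\<dots> = g_cycle (g a) ! k"
    using k by (simp add: funpow_g_mod nth_g_cycle funpow_swap1)
  finally show "rotate1 (g_cycle a) ! k = g_cycle (g a) ! k" .
qed simp

lemma rotate_g_cycle: "rotate j (g_cycle a) = g_cycle ((g ^^ j) a)"
  by (induction j) (simp_all add: rotate1_g_cycle)

lemma g_cycle_g: "g_cycle (g a) = g_path a @ [a]"
  using rotate1_g_cycle[of a] by (simp add: g_cycle_Cons)

lemma triangle_eq_iff [simp]: "triangle a = triangle b \<longleftrightarrow> a = b"
  by (auto simp: triangle_def)

lemma g_cycle_eq_iff [simp]: "g_cycle a = g_cycle b \<longleftrightarrow> a = b"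
  by (metis g_cycle_Cons list.inject)

lemma t_last_g_path: "t (last (g_path a)) = s a"
proof -
  have "last (g_path a) = last (g_cycle a)" by (simp add: g_cycle_Cons)
  also have "\<dots> = g_cycle a ! (n a - 1)"
    using last_conv_nth[of "g_cycle a"] by (simp add: g_cycle_Cons)
  also have "\<dots> = (g ^^ (n a - 1)) a"
    using n_ge_3[of a] by (simp add: nth_g_cycle)
  finally have "g (last (g_path a)) = (g ^^ Suc (n a - 1)) a" by simp
  also have "\<dots> = a" using n_ge_3[of a] by simp
  finally show ?thesis using s_g by metis
qed

lemma is_path_f_path: "is_path s t (t x, [f x, f (f x)])"
  using is_path_chain[OF chain_f_path, of s t x] by simp

lemma is_path_g_path: "is_path s t (t x, g_path x)"
  using is_path_chain[OF chain_g_path, of s t x] by simp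

lemma is_cycle_triangle: "is_cycle s t (cyc s (triangle a))"
  using is_path_chain[OF chain_triangle, of s t a]
  by (simp add: is_cycle_def cyc_def pend_def triangle_def)

lemma cyc_eq_iff [simp]: "cyc s L = cyc s M \<longleftrightarrow> L = M"
  by (auto simp: cyc_def)

lemma cyc_triangle: "cyc s (triangle a) = (s a, triangle a)"
  by (simp add: cyc_def triangle_def)

lemma cyc_g_cycle: "cyc s (g_cycle a) = (s a, g_cycle a)"
  by (simp add: cyc_def g_cycle_Cons)

abbreviation W :: "'v \<times> 'a list \<Rightarrow> 'k" where
  "W \<equiv> QP_potential s f g c Rf Rg"

lemma W_cyc: "W (cyc s L) = (\<Sum>a\<in>Rf. if L = triangle a then 1 else 0)
    - (\<Sum>b\<in>Rg. if L = g_cycle b then c b else 0)"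
  unfolding QP_potential_def delta_def triangle_def g_cycle_def
  by (simp add: if_distrib cong: if_cong)

lemma W_triangle: "W (cyc s (triangle a)) = (if a \<in> Rf then 1 else 0)"
  by (simp add: W_cyc)

lemma W_g_cycle: "W (cyc s (g_cycle a)) = (if a \<in> Rg then - c a else 0)"
  by (simp add: W_cyc triangle_neq_g_cycle[symmetric])

lemma sum_W_rotate_triangle: "(\<Sum>j<3. W (cyc s (rotate j (triangle a)))) = 1"
  using sum_orbit_reps[OF permutation_f Rf, of a 1]
  by (simp add: rotate_triangle W_triangle orbit_size_f)

lemma sum_W_rotate_g_cycle: "(\<Sum>j<n a. W (cyc s (rotate j (g_cycle a)))) = - c a"
proof -
  have "(\<Sum>j<n a. W (cyc s (rotate j (g_cycle a))))
      = (\<Sum>j<n a. if (g ^^ j) a \<in> Rg then - c a else 0)"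
    by (intro sum.cong) (simp_all add: rotate_g_cycle W_g_cycle)
  then show ?thesis using sum_orbit_reps[OF permutation_g Rg] by simp
qed

lemma W_rotate_other:
  assumes "x # q \<noteq> triangle x" "x # q \<noteq> g_cycle x"
  shows "W (cyc s (rotate j (x # q))) = 0"
proof -
  let ?k = "(length (x # q) - 1) * j"
  have "rotate j (x # q) \<noteq> triangle a" for a
  proof
    assume "rotate j (x # q) = triangle a"
    then have "x # q = triangle ((f ^^ ?k) a)"
      by (metis rotate_inverse rotate_triangle)
    then show False using assms(1) by (metis list.sel(1) triangle_def)
  qed
  moreover have "rotate j (x # q) \<noteq> g_cycle a" for a
  proof
    assume "rotate j (x # q) = g_cycle a"
    then have "x # q = g_cycle ((g ^^ ?k) a)"
      by (metis rotate_inverse rotate_g_cycle)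
    then show False using assms(2) by (metis list.sel(1) g_cycle_Cons)
  qed
  ultimately show ?thesis by (simp add: W_cyc)
qed

lemma cder_W: "cder s t x W = (\<lambda>p. delta (t x, [f x, f (f x)]) p - c x * delta (t x, g_path x) p)"
proof -
  have "cder s t x W (v, q) = delta (t x, [f x, f (f x)]) (v, q) - c x * delta (t x, g_path x) (v, q)"
    for v q
  proof -
    consider "v = t x" "q = [f x, f (f x)]" | "v = t x" "q = g_path x"
      | "\<not> (v = t x \<and> q = [f x, f (f x)])" "\<not> (v = t x \<and> q = g_path x)"
      by blast
    then show ?thesis
    proof cases
      case 1
      then have "x # q = triangle x" "Suc (length q) = 3" by (simp_all add: triangle_def)
      have "cder s t x W (v, q) = (\<Sum>j<Suc (length q). W (cyc s (rotate j (x # q))))"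
        using 1 is_path_f_path by (simp add: cder_def pend_def)
      also have "\<dots> = 1"
        using sum_W_rotate_triangle by (simp only: \<open>x # q = _\<close> \<open>Suc (length q) = 3\<close>)
      finally show ?thesis using 1 f_path_neq_g_path by (simp add: delta_def)
    next
      case 2
      then have "x # q = g_cycle x" "Suc (length q) = n x"
        using n_ge_3[of x] by (simp_all add: g_cycle_Cons)
      have "cder s t x W (v, q) = (\<Sum>j<Suc (length q). W (cyc s (rotate j (x # q))))"
        using 2 is_path_g_path t_last_g_path by (simp add: cder_def pend_def)
      also have "\<dots> = - c x"
        using sum_W_rotate_g_cycle by (simp only: \<open>x # q = _\<close> \<open>Suc (length q) = n x\<close>)
      finally show ?thesis using 2 f_path_neq_g_path[symmetric] by (simp add: delta_def)
    next
      case 3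
      then have "v = t x \<Longrightarrow> x # q \<noteq> triangle x \<and> x # q \<noteq> g_cycle x"
        by (simp add: triangle_def g_cycle_Cons)
      with 3 show ?thesis by (auto simp: cder_def delta_def W_rotate_other)
    qed
  qed
  then show ?thesis by (intro ext) (metis surj_pair)
qed

lemma sandwich_f_path_triangle:
  "pmul t (pmul t u (delta (t x, [f x, f (f x)]))) w (s y, triangle y)
     = (if y = f x then u (t x, []) * w (s x, [x]) else 0)
     + (if y = x then u (s x, [x]) * w (s x, []) else 0)"
proof -
  have "pmul t (pmul t u (delta (t x, [f x, f (f x)]))) w (s y, triangle y)
     = (if s y = t x \<and> [y, f y] = [f x, f (f x)] then u (s y, []) * w (t (f y), [f (f y)]) else 0)
     + (if t y = t x \<and> [f y, f (f y)] = [f x, f (f x)] then u (s y, [y]) * w (t (f (f y)), []) else 0)"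
    unfolding pmul_pmul_delta_apply
    by (simp add: triangle_def numeral_3_eq_3 atLeast0_atMost_Suc pend_def)
  also have "\<dots> = (if y = f x then u (t x, []) * w (s x, [x]) else 0)
     + (if y = x then u (s x, [x]) * w (s x, []) else 0)"
    using not_sym[OF f_neq_self(1)[of x]] by (cases "y = x") auto
  finally show ?thesis .
qed

lemma sandwich_g_path_triangle: "pmul t (pmul t u (delta (t x, g_path x))) w (v, triangle y) = 0"
proof (rule pmul_pmul_delta_eq_0)
  fix i j
  show "drop j (take i (triangle y)) \<noteq> g_path x"
  proof
    assume "drop j (take i (triangle y)) = g_path x"
    then have "chain f (g_path x)" using chain_drop_take[OF chain_triangle, of j i y] by simp
    then show False using not_chain_f_g[OF _ chain_g_path[of x]] n_ge_3[of x] by simp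
  qed
qed

lemma sandwich_f_path_g_cycle: "pmul t (pmul t u (delta (t x, [f x, f (f x)]))) w (v, g_cycle y) = 0"
proof (rule pmul_pmul_delta_eq_0)
  fix i j
  show "drop j (take i (g_cycle y)) \<noteq> [f x, f (f x)]"
  proof
    assume "drop j (take i (g_cycle y)) = [f x, f (f x)]"
    then have "chain g [f x, f (f x)]" using chain_drop_take[OF chain_g_cycle, of j i y] by simp
    then show False using not_chain_f_g[OF chain_f_path] by fastforce
  qed
qed

lemma g_path_occurs_in_g_cycle_iff:
  assumes "i \<le> n y"
  shows "(n x - 1 \<le> i \<and> pend t (s y) (take (i - (n x - 1)) (g_cycle y)) = t x
          \<and> drop (i - (n x - 1)) (take i (g_cycle y)) = g_path x)
     \<longleftrightarrow> (y = g x \<and> i = n x - 1) \<or> (y = x \<and> i = n x)"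
proof
  assume occ: "n x - 1 \<le> i \<and> pend t (s y) (take (i - (n x - 1)) (g_cycle y)) = t x
          \<and> drop (i - (n x - 1)) (take i (g_cycle y)) = g_path x"
  define j where "j = i - (n x - 1)"
  have "j < i" "j < n y" using occ assms n_ge_3[of x] by (auto simp: j_def)
  then have "(g ^^ j) y = hd (drop j (take i (g_cycle y)))"
    by (simp add: hd_drop_conv_nth nth_g_cycle)
  then have gj: "(g ^^ j) y = g x" using occ by (simp add: j_def)
  then have "n y = n x" by (metis n_funpow_g n_g)
  then have "j = 0 \<or> j = 1" using assms unfolding j_def by linarith
  then show "(y = g x \<and> i = n x - 1) \<or> (y = x \<and> i = n x)"
    using gj occ n_ge_3[of x] unfolding j_def by auto
next
  assume "(y = g x \<and> i = n x - 1) \<or> (y = x \<and> i = n x)"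
  then show "n x - 1 \<le> i \<and> pend t (s y) (take (i - (n x - 1)) (g_cycle y)) = t x
          \<and> drop (i - (n x - 1)) (take i (g_cycle y)) = g_path x"
  proof (elim disjE conjE)
    assume "y = g x" "i = n x - 1"
    then show ?thesis by (simp add: g_cycle_g pend_def)
  next
    assume "y = x" "i = n x"
    moreover have "n x - (n x - 1) = 1" using n_ge_3[of x] by simp
    ultimately show ?thesis by (simp add: g_cycle_Cons pend_def)
  qed
qed

lemma sandwich_g_path_g_cycle:
  "pmul t (pmul t u (delta (t x, g_path x))) w (s y, g_cycle y)
     = (if y = g x then u (t x, []) * w (s x, [x]) else 0)
     + (if y = x then u (s x, [x]) * w (s x, []) else 0)"
proof -
  define F where "F i = u (s y, take (i - (n x - 1)) (g_cycle y))
    * w (pend t (s y) (take i (g_cycle y)), drop i (g_cycle y))" for i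
  have "pmul t (pmul t u (delta (t x, g_path x))) w (s y, g_cycle y)
      = (\<Sum>i\<in>{0..n y}. (if y = g x \<and> i = n x - 1 then F i else 0) + (if y = x \<and> i = n x then F i else 0))"
    unfolding pmul_pmul_delta_apply F_def
    using g_path_occurs_in_g_cycle_iff g_neq_self[of x] by (intro sum.cong) auto
  also have "\<dots> = (if y = g x then F (n x - 1) else 0) + (if y = x then F (n x) else 0)"
    by (simp add: sum.distrib)
  also have "\<dots> = (if y = g x then u (t x, []) * w (s x, [x]) else 0)
     + (if y = x then u (s x, [x]) * w (s x, []) else 0)"
  proof -
    have "F (n x - 1) = u (t x, []) * w (s x, [x])" if "y = g x"
      using that by (simp add: F_def g_cycle_g pend_def t_last_g_path)
    moreover have "F (n x) = u (s x, [x]) * w (s x, [])" if "y = x"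
    proof -
      have "n x - (n x - 1) = 1" using n_ge_3[of x] by simp
      then show ?thesis using that by (simp add: F_def g_cycle_Cons pend_def t_last_g_path)
    qed
    ultimately show ?thesis by simp
  qed
  finally show ?thesis .
qed

subsection \<open>The obstruction functional\<close>

definition obstruction :: "('v \<times> 'a list \<Rightarrow> 'k) \<Rightarrow> 'k" where
  "obstruction X = (\<Sum>y\<in>UNIV. X (cyc s (triangle y))) + (\<Sum>y\<in>UNIV. X (cyc s (g_cycle y)) / c y)"

lemma obstruction_add: "obstruction (\<lambda>p. X p + Y p) = obstruction X + obstruction Y"
  unfolding obstruction_def by (simp add: sum.distrib add_divide_distrib algebra_simps)

lemma obstruction_diff: "obstruction (\<lambda>p. X p - Y p) = obstruction X - obstruction Y"
  unfolding obstruction_def by (simp add: sum_subtractf diff_divide_distrib algebra_simps)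

lemma obstruction_scale: "obstruction (\<lambda>p. k * X p) = k * obstruction X"
  unfolding obstruction_def by (simp add: sum_distrib_left algebra_simps)

lemma obstruction_cong_bounded:
  assumes "\<And>p. length (snd p) \<le> card (UNIV :: 'a set) + 3 \<Longrightarrow> X p = Y p"
  shows "obstruction X = obstruction Y"
  unfolding obstruction_def
  using assms orbit_size_le_card[of g] by (simp add: cyc_def triangle_def trans_le_add1)

lemma obstruction_mclosure:
  assumes "\<And>z. z \<in> S \<Longrightarrow> obstruction z = 0" "x \<in> mclosure s t S"
  shows "obstruction x = 0"
proof -
  obtain z where "z \<in> S" "\<forall>p. length (snd p) \<le> card (UNIV :: 'a set) + 3 \<longrightarrow> x p = z p"
    using assms(2) unfolding mclosure_def by blast
  then show ?thesis using assms(1) obstruction_cong_bounded by metis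
qed

lemma obstruction_sandwich_cder: "obstruction (pmul t (pmul t u (cder s t x W)) w) = 0"
proof -
  define A where "A = u (t x, []) * w (s x, [x]) + u (s x, [x]) * w (s x, [])"
  have "obstruction (pmul t (pmul t u (delta (t x, [f x, f (f x)]))) w) = A"
    unfolding obstruction_def A_def cyc_triangle cyc_g_cycle
    by (simp add: sandwich_f_path_triangle sandwich_f_path_g_cycle sum.distrib)
  moreover have "obstruction (pmul t (pmul t u (delta (t x, g_path x))) w) = A / c x"
    unfolding obstruction_def A_def cyc_triangle cyc_g_cycle
    by (simp add: sandwich_g_path_triangle sandwich_g_path_g_cycle sum.distrib add_divide_distrib
        if_distrib[of "\<lambda>z. z / _"] c_const cong: if_cong)
  ultimately show ?thesis
    using c_nz by (simp add: cder_W pmul_pmul_diff_scale obstruction_diff obstruction_scale)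
qed

lemma obstruction_jacobian_ideal:
  assumes "Y \<in> jacobian_ideal s t W"
  shows "obstruction Y = 0"
proof -
  have "obstruction z = 0" if "z \<in> ideal_span s t (range (\<lambda>a. cder s t a W))" for z
    using that
  proof (induction rule: ideal_span.induct)
    case zero
    then show ?case by (simp add: obstruction_def)
  next
    case (step x y u w)
    then show ?case by (auto simp: obstruction_add obstruction_sandwich_cder)
  qed
  then show ?thesis using assms unfolding jacobian_ideal_def by (rule obstruction_mclosure)
qed

lemma obstruction_delta_rotate1:
  assumes "is_cycle s t (v, xs)"
  shows "obstruction (delta (cyc s (rotate1 xs))) = obstruction (delta (v, xs))"
proof -
  have v: "(v, xs) = cyc s xs" using assms by (simp add: is_cycle_def is_path_def cyc_def)
  have rotate1_eq_iff: "rotate1 ys = rotate1 zs \<longleftrightarrow> ys = zs" for ys zs :: "'a list"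
    using inj_rotate1 by (auto dest: injD)
  have sum_f: "sum F UNIV = (\<Sum>y\<in>UNIV. F (f y))" and sum_g: "sum F UNIV = (\<Sum>y\<in>UNIV. F (g y))"
    for F :: "'a \<Rightarrow> 'k"
    using bij_f bij_g by (simp_all add: sum.reindex_bij_betw)
  have "(\<Sum>y\<in>UNIV. if triangle y = rotate1 xs then 1 else 0)
      = (\<Sum>y\<in>UNIV. if triangle y = xs then (1::'k) else 0)"
    by (subst sum_f) (simp add: rotate1_triangle[symmetric] rotate1_eq_iff)
  moreover have "(\<Sum>y\<in>UNIV. (if g_cycle y = rotate1 xs then 1 else 0) / c y)
      = (\<Sum>y\<in>UNIV. (if g_cycle y = xs then (1::'k) else 0) / c y)"
    by (subst sum_g) (simp add: rotate1_g_cycle[symmetric] rotate1_eq_iff c_const)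
  ultimately show ?thesis unfolding obstruction_def delta_def v by simp
qed

lemma obstruction_cyc_equiv:
  assumes "cyc_equiv s t P Y"
  shows "obstruction P = obstruction Y"
proof -
  have "obstruction z = 0" if "z \<in> cyc_comm_span s t" for z
    using that
  proof (induction rule: cyc_comm_span.induct)
    case zero
    then show ?case by (simp add: obstruction_def)
  next
    case (step x v xs k)
    then show ?case
      by (simp add: obstruction_add obstruction_scale obstruction_diff obstruction_delta_rotate1)
  qed
  then have "obstruction (\<lambda>p. P p - Y p) = 0"
    using assms unfolding cyc_equiv_def by (rule obstruction_mclosure)
  then show ?thesis by (simp add: obstruction_diff)
qed

lemma obstruction_delta_triangle: "obstruction (delta (cyc s (triangle a))) = 1"
  by (simp add: obstruction_def delta_def triangle_neq_g_cycle[symmetric])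

lemma potential_delta_triangle: "potential s t (delta (cyc s (triangle a)))"
  using is_cycle_triangle by (simp add: potential_def delta_def)

end

theorem proposition4p4:
  fixes s t :: "'a::finite \<Rightarrow> 'v::finite"
    and f g :: "'a \<Rightarrow> 'a"
    and c :: "'a \<Rightarrow> 'k::field"
    and Rf Rg :: "'a set"
  assumes connected: "\<forall>u v. (u, v) \<in> (range (\<lambda>a. (s a, t a)) \<union> range (\<lambda>a. (t a, s a)))\<^sup>*"
    and no_loops: "\<forall>a. s a \<noteq> t a"
    and no_2cycles: "\<forall>a b. \<not> (s a = t b \<and> t a = s b)"
    and out2: "\<forall>v. card {a. s a = v} = 2"
    and in2: "\<forall>v. card {a. t a = v} = 2"
    and bij_f: "bij f" and bij_g: "bij g"
    and fg: "\<forall>a. {f a, g a} = {b. s b = t a}"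
    and f3: "f \<circ> f \<circ> f = id"
    and c_nz: "\<forall>a. c a \<noteq> 0"
    and c_const: "\<forall>a. c (g a) = c a"
    and Rf: "orbit_reps f Rf"
    and Rg: "orbit_reps g Rg"
    and cond: "(\<forall>a. 4 \<le> orbit_size g a \<or> 4 \<le> orbit_size g (f a))
             \<or> ((\<forall>a. orbit_size g a = 3) \<and> (\<Prod>b\<in>Rg. c b) \<noteq> 1)"
  shows "\<not> rigid s t (QP_potential s f g c Rf Rg)"
proof
  interpret triangulation_quiver s t f g c Rf Rg
    using no_loops no_2cycles out2 bij_f bij_g fg f3 c_nz c_const Rf Rg
    by unfold_locales
  fix a :: 'a
  let ?P = "delta (cyc s (triangle a)) :: 'v \<times> 'a list \<Rightarrow> 'k"
  assume "rigid s t W"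
  then obtain Y where "Y \<in> jacobian_ideal s t W" "cyc_equiv s t ?P Y"
    using potential_delta_triangle unfolding rigid_def by blast
  then have "obstruction ?P = 0"
    by (simp add: obstruction_cyc_equiv obstruction_jacobian_ideal)
  then show False by (simp add: obstruction_delta_triangle)
qed

end
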